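(* In the completion $\widehat{\mathbf{Sym}}$ (formal infinite sums of homogeneous elements), let $\mathbf{t}=\sum_{k\ge0}(-1)^kT_{2k+1}$ with $T_{2k+1}=R_{(2^k,1)}$, and let $\tilde\sigma_1=\sum_{n\ge0}\tilde S_n$. Then $\tilde\sigma_1=(1+\mathbf{t})(1-\mathbf{t})^{-1}$, and $$\log\tilde\sigma_1=\log(1+\mathbf{t})-\log(1-\mathbf{t})=2\sum_{k\ge0}\frac{\mathbf{t}^{2k+1}}{2k+1}=2\sum_{I}\frac{(-1)^{(|I|-\ell(I))/2}}{\ell(I)}\,T^I,$$ where the last sum runs over all compositions $I$ with all parts odd and with an odd number of parts $\ell(I)$, $|I|$ is the sum of the parts of $I$, and $T^I=T_{i_1}\cdots T_{i_r}$.
   Context: $\mathbf{Sym}$ is the free associative $\mathbb{Q}$-algebra on $S_1,S_2,\dots$ ($S_0=1$, $\deg S_n=n$). Ribbons $R_J$ are defined by $S_{i_1}\cdots S_{i_r}=\sum_{J\models n,\ \operatorname{Des}(J)\subseteq\operatorname{Des}(I)}R_J$, where $\operatorname{Des}(I)$ is the set of partial sums $i_1,\dots,i_1+\cdots+i_{r-1}$. $\Lambda_n=R_{(1^n)}$, $\Lambda_0=1$, and $\tilde S_n=\sum_{k=0}^n\Lambda_kS_{n-k}$ (so $\tilde S_0=1$). $(2^k,1)$ is the composition with $k$ parts $2$ followed by a part $1$. *)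

theory Defs
  imports Complex_Main "HOL-Library.Function_Algebras" "HOL-Library.Groups_Big_Fun"
begin

text \<open>Model of the completion of Sym: an element is the family of its coefficients
  in the basis S^I (I a composition, i.e. a list of positive naturals).
  Coefficients at lists containing 0 are meaningless and are 0 for all elements built here.
  Addition/subtraction are pointwise (Function_Algebras); the product is concatenation
  product (Sym is free on S_1, S_2, ...).\<close>

type_synonym ncsf = "nat list \<Rightarrow> rat"

definition comps :: "nat \<Rightarrow> nat list set" where
  "comps n = {I. sum_list I = n \<and> 0 \<notin> set I}"

definition nc_one :: ncsf where
  "nc_one = (\<lambda>K. if K = [] then 1 else 0)"

definition nc_mult :: "ncsf \<Rightarrow> ncsf \<Rightarrow> ncsf" where
  "nc_mult f g = (\<lambda>K. \<Sum>i\<le>length K. f (take i K) * g (drop i K))"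

definition nc_smult :: "rat \<Rightarrow> ncsf \<Rightarrow> ncsf" where
  "nc_smult c f = (\<lambda>K. c * f K)"

primrec nc_pow :: "ncsf \<Rightarrow> nat \<Rightarrow> ncsf" where
  "nc_pow f 0 = nc_one"
| "nc_pow f (Suc n) = nc_mult f (nc_pow f n)"

definition nc_sum_set :: "'a set \<Rightarrow> ('a \<Rightarrow> ncsf) \<Rightarrow> ncsf" where
  "nc_sum_set A F = (\<lambda>K. Sum_any (\<lambda>a. if a \<in> A then F a K else 0))"

abbreviation nc_sum :: "('a \<Rightarrow> ncsf) \<Rightarrow> ncsf" where
  "nc_sum F \<equiv> nc_sum_set UNIV F"

definition nc_invertible :: "ncsf \<Rightarrow> bool" where
  "nc_invertible f \<longleftrightarrow> (\<exists>g. nc_mult f g = nc_one \<and> nc_mult g f = nc_one)"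

definition nc_inv :: "ncsf \<Rightarrow> ncsf" where
  "nc_inv f = (THE g. nc_mult f g = nc_one \<and> nc_mult g f = nc_one)"

definition nc_log :: "ncsf \<Rightarrow> ncsf" where
  "nc_log f = nc_sum (\<lambda>n::nat. if n = 0 then 0
       else nc_smult ((-1) ^ (n + 1) / of_nat n) (nc_pow (f - nc_one) n))"

definition S :: "nat \<Rightarrow> ncsf" where
  "S n = (if n = 0 then nc_one else (\<lambda>K. if K = [n] then 1 else 0))"

definition SI :: "nat list \<Rightarrow> ncsf" where
  "SI I = foldr (\<lambda>i acc. nc_mult (S i) acc) I nc_one"

definition Des :: "nat list \<Rightarrow> nat set" where
  "Des I = {sum_list (take j I) | j. 0 < j \<and> j < length I}"

definition ribbons :: "nat list \<Rightarrow> ncsf" where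
  "ribbons = (THE R. (\<forall>n. \<forall>I\<in>comps n. SI I = (\<Sum>J\<in>{J\<in>comps n. Des J \<subseteq> Des I}. R J))
                  \<and> (\<forall>J. 0 \<in> set J \<longrightarrow> R J = 0))"

abbreviation R :: "nat list \<Rightarrow> ncsf" where
  "R J \<equiv> ribbons J"

definition Lam :: "nat \<Rightarrow> ncsf" where
  "Lam n = (if n = 0 then nc_one else R (replicate n 1))"

definition St :: "nat \<Rightarrow> ncsf" where
  "St n = (\<Sum>k\<le>n. nc_mult (Lam k) (S (n - k)))"

definition T :: "nat \<Rightarrow> ncsf" where
  "T i = R (replicate ((i - 1) div 2) 2 @ [1])"

definition TI :: "nat list \<Rightarrow> ncsf" where
  "TI I = foldr (\<lambda>i acc. nc_mult (T i) acc) I nc_one"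

definition tt :: ncsf where
  "tt = nc_sum (\<lambda>k::nat. nc_smult ((-1) ^ k) (T (2 * k + 1)))"

definition sigma1t :: ncsf where
  "sigma1t = nc_sum (\<lambda>n::nat. St n)"

end

(* All elements involved lie in the image of the power series ring Q[[X]] under
   f |-> sum_K f_o(K) eps(K) S^K, where o(K) is the number of odd parts of K and eps(K) is a sign
   supported on the compositions ending with an odd part.  This map is a ring homomorphism (peel
   off the first part of K), it sends X to t (the ribbons R_(2^k,1) are computed by Moebius
   inversion over descent sets) and (1 + X)/(1 - X) to tilde sigma_1.  So the first four identities
   reduce to identities in Q[[X]]: ln((1 + X)/(1 - X)) = ln(1 + X) - ln(1 - X) since ln is additive
   on products (compare derivatives), and this is 2 artanh X.  For the last identity, T^I has
   nonzero coefficients only at the compositions K whose blocks (maximal runs of even parts closed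
   by an odd part) have the sums I, so the right-hand side is the image of 2 artanh X as well. *)

theory Submission
  imports Defs "HOL-Computational_Algebra.Formal_Power_Series"
begin

unbundle fps_syntax

section \<open>Power series\<close>

lemma fps_shift_1_mult:
  fixes f g :: "'a::semiring_1 fps"
  shows "fps_shift 1 (f * g) = fps_const (f $ 0) * fps_shift 1 g + fps_shift 1 f * g"
proof (rule fps_ext)
  fix n
  have "(f * g) $ Suc n = f $ 0 * g $ Suc n + (\<Sum>i=0..n. f $ Suc i * g $ (n - i))"
    unfolding fps_mult_nth by (subst sum.atLeast0_atMost_Suc_shift) simp
  moreover have "(fps_shift 1 f * g) $ n = (\<Sum>i=0..n. f $ Suc i * g $ (n - i))"
    by (simp add: fps_mult_nth)
  ultimately show "fps_shift 1 (f * g) $ n = (fps_const (f $ 0) * fps_shift 1 g + fps_shift 1 f * g) $ n"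
    by (simp add: fps_const_mult_left)
qed

lemma fps_compose_nth_Sum_any:
  fixes a g :: "'a::comm_ring_1 fps"
  assumes "g $ 0 = 0"
  shows "(a oo g) $ m = Sum_any (\<lambda>n. a $ n * (g ^ n $ m))"
proof -
  have "{n. a $ n * (g ^ n $ m) \<noteq> 0} \<subseteq> {0..m}"
  proof
    fix n assume "n \<in> {n. a $ n * (g ^ n $ m) \<noteq> 0}"
    then have "\<not> m < n" using startsby_zero_power_prefix[OF assms] by auto
    then show "n \<in> {0..m}" by simp
  qed
  then show ?thesis by (simp add: fps_compose_nth Sum_any.expand_superset[OF finite_atLeastAtMost])
qed

lemma fps_one_plus_X_over_one_minus_X_nth:
  "((1 + fps_X) * inverse (1 - fps_X) :: 'a::field fps) $ n = (if n = 0 then 1 else 2)"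
proof -
  have "inverse (1 - fps_X :: 'a fps) = Abs_fps (\<lambda>_. 1)"
    using fps_inverse_idempotent[of "Abs_fps (\<lambda>_. 1 :: 'a)"] by (simp add: fps_inverse_gp')
  then show ?thesis
    by (simp add: fps_mult_fps_X_plus_1_nth)
qed

lemma fps_deriv_fps_ln_compose:
  fixes f :: "'a::field_char_0 fps"
  assumes "f $ 0 = 1"
  shows "fps_deriv (fps_ln 1 oo (f - 1)) = inverse f * fps_deriv f"
proof -
  have g0: "(f - 1) $ 0 = 0" using assms by simp
  have "inverse (1 + fps_X) oo (f - 1) = inverse ((1 + fps_X) oo (f - 1))"
    by (rule fps_inverse_compose[OF g0]) simp
  also have "(1 + fps_X) oo (f - 1) = f"
    using g0 by (simp add: fps_compose_add_distrib)
  finally show ?thesis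
    using g0 by (simp add: fps_compose_deriv fps_ln_deriv)
qed

lemma fps_ln_compose_mult:
  fixes f g :: "'a::field_char_0 fps"
  assumes "f $ 0 = 1" and "g $ 0 = 1"
  shows "fps_ln 1 oo (f * g - 1) = (fps_ln 1 oo (f - 1)) + (fps_ln 1 oo (g - 1))"
proof -
  have fg: "(f * g) $ 0 = 1" using assms by simp
  have "inverse (f * g) * fps_deriv (f * g)
      = (inverse f * f) * (inverse g * fps_deriv g) + (inverse g * g) * (inverse f * fps_deriv f)"
    by (simp add: fps_inverse_mult algebra_simps)
  also have "\<dots> = inverse f * fps_deriv f + inverse g * fps_deriv g"
    using assms by (simp add: inverse_mult_eq_1)
  finally have "fps_deriv (fps_ln 1 oo (f * g - 1))
      = fps_deriv ((fps_ln 1 oo (f - 1)) + (fps_ln 1 oo (g - 1)))"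
    using assms fg by (simp add: fps_deriv_fps_ln_compose)
  then have "fps_ln 1 oo (f * g - 1)
      = fps_const ((fps_ln 1 oo (f * g - 1)) $ 0 - ((fps_ln 1 oo (f - 1)) + (fps_ln 1 oo (g - 1))) $ 0)
        + ((fps_ln 1 oo (f - 1)) + (fps_ln 1 oo (g - 1)))"
    by (rule fps_deriv_eq_iff[THEN iffD1])
  then show ?thesis
    by simp
qed

lemma fps_ln_compose_one_plus_X_over_one_minus_X:
  "fps_ln (1::'a::field_char_0) oo ((1 + fps_X) * inverse (1 - fps_X) - 1)
     = fps_ln 1 - (fps_ln 1 oo - fps_X)"
proof -
  have inv0: "inverse (1 - fps_X :: 'a fps) $ 0 = 1" by simp
  have "(1 - fps_X) * inverse (1 - fps_X :: 'a fps) = 1"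
    by (rule inverse_mult_eq_1') simp
  then have "0 = fps_ln (1::'a) oo ((1 - fps_X) * inverse (1 - fps_X) - 1)"
    by simp
  also have "\<dots> = (fps_ln 1 oo ((1 - fps_X) - 1)) + (fps_ln 1 oo (inverse (1 - fps_X) - 1))"
    using inv0 by (intro fps_ln_compose_mult) simp_all
  also have "(1 - fps_X) - 1 = - (fps_X :: 'a fps)"
    by simp
  finally have neg: "fps_ln (1::'a) oo (inverse (1 - fps_X) - 1) = - (fps_ln 1 oo - fps_X)"
    by (simp add: eq_neg_iff_add_eq_0 add.commute)
  have "fps_ln (1::'a) oo ((1 + fps_X) * inverse (1 - fps_X) - 1)
      = (fps_ln 1 oo ((1 + fps_X) - 1)) + (fps_ln 1 oo (inverse (1 - fps_X) - 1))"
    using inv0 by (intro fps_ln_compose_mult) simp_all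
  also have "\<dots> = fps_ln 1 - (fps_ln 1 oo - fps_X)"
    unfolding neg by simp
  finally show ?thesis .
qed

definition fps_artanh :: "'a::field_char_0 fps" where
  "fps_artanh = Abs_fps (\<lambda>n. if odd n then 1 / of_nat n else 0)"

lemma fps_ln_minus_fps_ln_compose_uminus:
  "fps_ln (1::'a::field_char_0) - (fps_ln 1 oo - fps_X) = fps_const 2 * fps_artanh"
  by (rule fps_ext) (auto simp: fps_compose_uminus' fps_ln_nth fps_artanh_def)

section \<open>The concatenation product\<close>

lemma nc_mult_Nil: "nc_mult f g [] = f [] * g []"
  by (simp add: nc_mult_def)

lemma nc_mult_Cons: "nc_mult f g (x # K) = f [] * g (x # K) + nc_mult (\<lambda>L. f (x # L)) g K"
  unfolding nc_mult_def by (simp add: sum.atMost_Suc_shift del: sum.atMost_Suc)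

lemma nc_mult_linear_left: "nc_mult (\<lambda>L. c * F L + G L) h K = c * nc_mult F h K + nc_mult G h K"
  unfolding nc_mult_def by (simp add: sum.distrib sum_distrib_left algebra_simps)

lemma nc_mult_smult_left: "nc_mult (\<lambda>L. c * F L) h K = c * nc_mult F h K"
  unfolding nc_mult_def by (simp add: sum_distrib_left mult.assoc)

lemma nc_mult_zero_left: "nc_mult (\<lambda>L. 0) h K = 0"
  unfolding nc_mult_def by simp

lemma nc_mult_one_left [simp]: "nc_mult nc_one g = g"
proof
  fix K show "nc_mult nc_one g K = g K"
    by (cases K) (simp_all add: nc_mult_Nil nc_mult_Cons nc_one_def nc_mult_zero_left)
qed

lemma nc_mult_one_right [simp]: "nc_mult f nc_one = f"
proof
  fix K show "nc_mult f nc_one K = f K"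
    by (induction K arbitrary: f) (simp_all add: nc_mult_Nil nc_mult_Cons nc_one_def)
qed

lemma nc_mult_assoc: "nc_mult (nc_mult f g) h = nc_mult f (nc_mult g h)"
proof
  fix K show "nc_mult (nc_mult f g) h K = nc_mult f (nc_mult g h) K"
  proof (induction K arbitrary: f g h)
    case Nil
    then show ?case by (simp add: nc_mult_Nil)
  next
    case (Cons x K)
    have "(\<lambda>L. nc_mult f g (x # L)) = (\<lambda>L. f [] * g (x # L) + nc_mult (\<lambda>L. f (x # L)) g L)"
      by (simp add: nc_mult_Cons)
    then show ?case
      by (simp add: nc_mult_Cons nc_mult_Nil nc_mult_linear_left Cons.IH) (simp add: algebra_simps)
  qed
qed

lemma nc_inv_eqI:
  assumes fg: "nc_mult f g = nc_one" and gf: "nc_mult g f = nc_one"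
  shows "nc_invertible f" and "nc_inv f = g"
proof -
  show "nc_invertible f"
    using fg gf by (auto simp: nc_invertible_def)
  have "h = g" if "nc_mult f h = nc_one" for h
  proof -
    have "h = nc_mult (nc_mult g f) h" by (simp add: gf)
    also have "\<dots> = g" by (simp add: nc_mult_assoc that)
    finally show ?thesis .
  qed
  then show "nc_inv f = g"
    unfolding nc_inv_def using fg gf by blast
qed

lemma sum_fun_apply: "(\<Sum>a\<in>A. F a) K = (\<Sum>a\<in>A. F a K)"
  by (induction A rule: infinite_finite_induct) auto

section \<open>Compositions and descent sets\<close>

lemma comps_0: "comps 0 = {[]}"
proof -
  have "K = []" if "sum_list K = 0" "0 \<notin> set K" for K :: "nat list"
    using that by (cases K) auto
  then show ?thesis by (auto simp: comps_def)
qed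

lemma length_le_sum_list: "0 \<notin> set K \<Longrightarrow> length K \<le> sum_list K"
  by (induction K) auto

lemma finite_comps: "finite (comps n)"
proof -
  have "comps n \<subseteq> {xs. set xs \<subseteq> {..n} \<and> length xs \<le> n}"
    using length_le_sum_list by (auto simp: comps_def member_le_sum_list)
  then show ?thesis using finite_lists_length_le[of "{..n}" n] finite_subset by blast
qed

lemma Des_Nil [simp]: "Des [] = {}"
  by (simp add: Des_def)

lemma Des_Cons: "Des (x # K) = (if K = [] then {} else insert x ((+) x ` Des K))"
proof (cases "K = []")
  case True then show ?thesis by (simp add: Des_def)
next
  case False
  have "Des (x # K) \<subseteq> insert x ((+) x ` Des K)"
  proof
    fix d assume "d \<in> Des (x # K)"
    then obtain j where j: "0 < j" "j < Suc (length K)" "d = sum_list (take j (x # K))"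
      by (auto simp: Des_def)
    then obtain j' where jj: "j = Suc j'" by (cases j) auto
    show "d \<in> insert x ((+) x ` Des K)"
    proof (cases "j' = 0")
      case True then show ?thesis using j jj by simp
    next
      case False
      then have "sum_list (take j' K) \<in> Des K" using j jj by (auto simp: Des_def)
      then show ?thesis using j jj by auto
    qed
  qed
  moreover have "insert x ((+) x ` Des K) \<subseteq> Des (x # K)"
  proof
    fix d assume "d \<in> insert x ((+) x ` Des K)"
    then consider "d = x" | j where "0 < j" "j < length K" "d = x + sum_list (take j K)"
      by (auto simp: Des_def)
    then show "d \<in> Des (x # K)"
    proof cases
      case 1
      have "sum_list (take 1 (x # K)) = x" by simp
      have "0 < (1::nat)" "1 < length (x # K)" using False by auto
      then show ?thesis using 1 \<open>sum_list (take 1 (x # K)) = x\<close> unfolding Des_def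
        by (intro CollectI exI[of _ 1]) auto
    next
      case 2
      have "sum_list (take (Suc j) (x # K)) = d" using 2 by simp
      then show ?thesis using 2 unfolding Des_def by force
    qed
  qed
  ultimately show ?thesis using False by auto
qed

lemma Des_single [simp]: "Des [x] = {}"
  by (simp add: Des_Cons)

lemma finite_Des: "finite (Des K)"
  unfolding Des_def by simp

lemma Des_subset: "0 \<notin> set K \<Longrightarrow> Des K \<subseteq> {0<..<sum_list K}"
proof (induction K)
  case (Cons x K)
  have "K \<noteq> [] \<Longrightarrow> 0 < sum_list K"
    using Cons.prems by (cases K) auto
  then show ?case
    using Cons by (cases "K = []") (auto simp: Des_Cons)
qed simp

lemma card_Des: "0 \<notin> set K \<Longrightarrow> K \<noteq> [] \<Longrightarrow> card (Des K) + 1 = length K"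
proof (induction K)
  case (Cons x K)
  show ?case
  proof (cases "K = []")
    case False
    have "x \<notin> (+) x ` Des K" using Des_subset[of K] Cons.prems by auto
    then show ?thesis using Cons False by (simp add: Des_Cons finite_Des card_image)
  qed simp
qed simp

lemma Des_inj: "J1 \<in> comps n \<Longrightarrow> J2 \<in> comps n \<Longrightarrow> Des J1 = Des J2 \<Longrightarrow> J1 = J2"
proof (induction J1 arbitrary: J2 n)
  case Nil
  then show ?case
    by (cases J2) (auto simp: comps_def)
next
  case (Cons x K1)
  have x0: "x > 0" using Cons.prems by (auto simp: comps_def)
  then obtain y K2 where J2: "J2 = y # K2"
    using Cons.prems by (cases J2) (auto simp: comps_def)
  show ?case
  proof (cases "K1 = []")
    case True
    then have "K2 = []" using Cons.prems J2 by (auto simp: Des_Cons split: if_splits)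
    then show ?thesis using Cons.prems J2 True by (auto simp: comps_def)
  next
    case False
    then have "K2 \<noteq> []" using Cons.prems J2 by (auto simp: Des_Cons split: if_splits)
    then have e: "insert x ((+) x ` Des K1) = insert y ((+) y ` Des K2)"
      using Cons.prems J2 False by (simp add: Des_Cons)
    have pos: "Des K1 \<subseteq> {0<..}" "Des K2 \<subseteq> {0<..}"
      using Des_subset[of K1] Des_subset[of K2] Cons.prems J2 by (auto simp: comps_def)
    have xy: "x = y"
      using e pos by (metis (no_types, lifting) antisym_conv1 image_iff insert_iff le_add1
          greaterThan_iff less_add_same_cancel1 not_less_iff_gr_or_eq subset_iff)
    have "(+) x ` Des K1 = (+) x ` Des K2"
    proof -
      have "x \<notin> (+) x ` Des K1" "x \<notin> (+) x ` Des K2" using pos by auto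
      then show ?thesis using e xy by (simp add: insert_ident)
    qed
    then have "Des K1 = Des K2" by (simp add: inj_image_eq_iff)
    moreover have "K1 \<in> comps (n - x)" "K2 \<in> comps (n - x)"
      using Cons.prems J2 xy by (auto simp: comps_def)
    ultimately show ?thesis using Cons.IH J2 xy by blast
  qed
qed

lemma Des_surj: "D \<subseteq> {0<..<n} \<Longrightarrow> n > 0 \<Longrightarrow> \<exists>J\<in>comps n. Des J = D"
proof (induction n arbitrary: D rule: less_induct)
  case (less n)
  show ?case
  proof (cases "D = {}")
    case True
    then show ?thesis using less.prems by (intro bexI[of _ "[n]"]) (auto simp: comps_def)
  next
    case False
    have "finite D" using less.prems finite_subset by blast
    define a where "a = Min D"
    have aD: "a \<in> D" and a_min: "\<And>d. d \<in> D \<Longrightarrow> a \<le> d"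
      using False \<open>finite D\<close> by (simp_all add: a_def)
    have a: "0 < a" "a < n" using aD less.prems by auto
    define D' where "D' = (\<lambda>d. d - a) ` (D - {a})"
    have "D' \<subseteq> {0<..<n - a}"
    proof
      fix e assume "e \<in> D'"
      then obtain d where d: "d \<in> D" "d \<noteq> a" "e = d - a" unfolding D'_def by auto
      then have "a < d" using a_min le_neq_implies_less by blast
      then show "e \<in> {0<..<n - a}" using d less.prems by auto
    qed
    then obtain J' where J': "J' \<in> comps (n - a)" "Des J' = D'"
      using less.IH[of "n - a" D'] a by auto
    have "J' \<noteq> []" using J' a by (auto simp: comps_def)
    have "(+) a ` D' = D - {a}"
    proof -
      have "(\<lambda>x. a + (x - a)) ` (D - {a}) = id ` (D - {a})"
        using a_min by (intro image_cong) auto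
      then show ?thesis unfolding D'_def image_image by simp
    qed
    then have "Des (a # J') = D" using \<open>J' \<noteq> []\<close> J' aD by (auto simp: Des_Cons)
    moreover have "a # J' \<in> comps n" using J' a by (auto simp: comps_def)
    ultimately show ?thesis by blast
  qed
qed

lemma bij_betw_Des_Pow_Des:
  assumes I: "I \<in> comps n" and "n > 0"
  shows "bij_betw Des {J. J \<in> comps n \<and> Des J \<subseteq> Des I} (Pow (Des I))"
proof -
  let ?A = "{J. J \<in> comps n \<and> Des J \<subseteq> Des I}"
  have "Des ` ?A = Pow (Des I)"
  proof
    show "Des ` ?A \<subseteq> Pow (Des I)" by blast
    show "Pow (Des I) \<subseteq> Des ` ?A"
    proof
      fix D assume D: "D \<in> Pow (Des I)"
      then have "D \<subseteq> {0<..<n}" using Des_subset[of I] I by (auto simp: comps_def)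
      then obtain J where "J \<in> comps n" "Des J = D" using Des_surj \<open>n > 0\<close> by blast
      then show "D \<in> Des ` ?A" using D by blast
    qed
  qed
  moreover have "inj_on Des ?A"
    by (rule inj_onI) (use Des_inj in blast)
  ultimately show ?thesis
    by (simp add: bij_betw_def)
qed

lemma length_less_if_Des_subset:
  assumes "J \<in> comps n" "J' \<in> comps n" "Des J' \<subseteq> Des J" "J' \<noteq> J"
  shows "length J' < length J"
proof -
  have "card (Des J') < card (Des J)"
    using assms Des_inj finite_Des by (metis psubsetI psubset_card_mono)
  moreover have "J \<noteq> []" "0 \<notin> set J" "0 \<notin> set J'"
    using assms comps_0 by (auto simp: comps_def)
  ultimately show ?thesis
    using card_Des[of J] card_Des[of J'] by (cases "J' = []") auto
qed

lemma Des_replicate_1: "Des (replicate k 1) = {0<..<k}"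
proof -
  have s: "sum_list (take j (replicate k (1::nat))) = j" if "j < k" for j
    using that by (simp add: take_replicate sum_list_replicate)
  show ?thesis
  proof (intro set_eqI iffI)
    fix d assume "d \<in> Des (replicate k 1)"
    then obtain j where "0 < j" "j < k" "d = sum_list (take j (replicate k (1::nat)))"
      unfolding Des_def by auto
    then show "d \<in> {0<..<k}" using s by simp
  next
    fix d assume "d \<in> {0<..<k}"
    then have "0 < d \<and> d < length (replicate k (1::nat)) \<and> d = sum_list (take d (replicate k 1))"
      using s by simp
    then show "d \<in> Des (replicate k 1)"
      unfolding Des_def by blast
  qed
qed

lemma Des_replicate_2_1: "Des (replicate k 2 @ [1]) = {d. 0 < d \<and> d < 2 * k + 1 \<and> even d}"
proof -
  have s: "sum_list (take j (replicate k 2 @ [1::nat])) = 2 * j" if "j \<le> k" for j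
    using that by (simp add: take_replicate sum_list_replicate)
  show ?thesis
  proof (intro set_eqI iffI)
    fix d assume "d \<in> Des (replicate k 2 @ [1])"
    then obtain j where "0 < j" "j \<le> k" "d = sum_list (take j (replicate k 2 @ [1::nat]))"
      unfolding Des_def by auto
    then show "d \<in> {d. 0 < d \<and> d < 2 * k + 1 \<and> even d}" using s by simp
  next
    fix d assume "d \<in> {d. 0 < d \<and> d < 2 * k + 1 \<and> even d}"
    then obtain j where j: "d = 2 * j" "0 < j" "j \<le> k" by (auto elim!: evenE)
    then have "0 < j \<and> j < length (replicate k 2 @ [1::nat])
        \<and> d = sum_list (take j (replicate k 2 @ [1]))"
      using s by simp
    then show "d \<in> Des (replicate k 2 @ [1])"
      unfolding Des_def by blast
  qed
qed

lemma Des_subset_evens_iff: "Des K \<subseteq> {d. even d} \<longleftrightarrow> (\<forall>x\<in>set (butlast K). even x)"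
proof (induction K)
  case (Cons x K)
  then show ?case by (cases "K = []") (auto simp: Des_Cons)
qed simp

section \<open>Ribbons\<close>

lemma nc_mult_S_left:
  "i > 0 \<Longrightarrow> nc_mult (S i) g K = (case K of [] \<Rightarrow> 0 | x # L \<Rightarrow> if x = i then g L else 0)"
proof (cases K)
  case (Cons x L)
  assume "i > 0"
  then have "(\<lambda>M. S i (x # M)) = (if x = i then nc_one else (\<lambda>M. 0))"
    by (auto simp: S_def nc_one_def fun_eq_iff)
  then show ?thesis using \<open>i > 0\<close> Cons
    by (simp add: nc_mult_Cons nc_mult_zero_left) (simp add: S_def)
qed (simp add: nc_mult_Nil S_def)

lemma nc_mult_S_right:
  "j > 0 \<Longrightarrow> nc_mult f (S j) K = (if K \<noteq> [] \<and> last K = j then f (butlast K) else 0)"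
proof (induction K arbitrary: f)
  case (Cons x K)
  then show ?case by (cases "K = []") (auto simp: nc_mult_Cons S_def)
qed (simp add: nc_mult_Nil S_def)

lemma SI_eq: "0 \<notin> set I \<Longrightarrow> SI I = (\<lambda>K. if K = I then 1 else 0)"
proof (induction I)
  case (Cons i I)
  have "SI (i # I) = nc_mult (S i) (SI I)" by (simp add: SI_def)
  then show ?case using Cons by (auto simp: fun_eq_iff nc_mult_S_left split: list.splits)
qed (simp add: SI_def nc_one_def)

lemma sum_minus_one_power_card_interval:
  assumes "finite B"
  shows "(\<Sum>D | D \<subseteq> B \<and> A \<subseteq> D. (-1::'a::ring_1) ^ card D) = (if A = B then (-1) ^ card B else 0)"
proof -
  consider "A = B" | "A \<subset> B" | "\<not> A \<subseteq> B" by blast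
  then show ?thesis
  proof cases
    case 1
    then have "{D. D \<subseteq> B \<and> A \<subseteq> D} = {B}" by auto
    then show ?thesis using 1 by simp
  next
    case 2
    have "finite {D. D \<subseteq> B \<and> A \<subseteq> D}"
      using assms by (simp add: finite_subset[of _ "Pow B"] subset_eq)
    then have "(\<Sum>D | D \<subseteq> B \<and> A \<subseteq> D. (-1::'a) ^ card D) = 0"
      by (rule sum_alternating_cancels) (simp add: conj_assoc card_subsupersets_even_odd[OF assms 2])
    then show ?thesis
      using 2 by auto
  next
    case 3
    then have "{D. D \<subseteq> B \<and> A \<subseteq> D} = {}" and "A \<noteq> B" by blast+
    then show ?thesis by (simp only: sum.empty if_False)
  qed
qed

text \<open>ribbon_expansion J K is the coefficient of S^K in R_J, obtained by Moebius inversion of the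
  defining relation over the boolean lattice of descent sets.\<close>

definition ribbon_expansion :: "nat list \<Rightarrow> ncsf" where
  "ribbon_expansion J = (\<lambda>K. if 0 \<notin> set J \<and> K \<in> comps (sum_list J) \<and> Des K \<subseteq> Des J
                               then (-1) ^ (length J + length K) else 0)"

lemma sum_ribbon_expansion:
  assumes I: "I \<in> comps n" and K: "K \<in> comps n" and "n > 0"
  shows "(\<Sum>J | J \<in> comps n \<and> Des J \<subseteq> Des I. ribbon_expansion J K) = (if K = I then 1 else 0)"
proof -
  let ?A = "{J. J \<in> comps n \<and> Des J \<subseteq> Des I}"
  let ?g = "\<lambda>D. if Des K \<subseteq> D then (-1::rat) ^ card D * (-1) ^ card (Des K) else 0"
  have length_Des: "length J = card (Des J) + 1" if "J \<in> comps n" for J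
  proof -
    have "J \<noteq> []" "0 \<notin> set J" using that \<open>n > 0\<close> by (auto simp: comps_def)
    then show ?thesis using card_Des[of J] by simp
  qed
  have "ribbon_expansion J K = ?g (Des J)" if "J \<in> ?A" for J
  proof -
    have "(-1::rat) ^ (length J + length K) = (-1) ^ card (Des J) * (-1) ^ card (Des K)"
      using that K by (simp add: length_Des power_add)
    then show ?thesis
      using that K by (auto simp: ribbon_expansion_def comps_def)
  qed
  then have "(\<Sum>J\<in>?A. ribbon_expansion J K) = (\<Sum>J\<in>?A. ?g (Des J))"
    by (rule sum.cong[OF refl])
  also have "\<dots> = (\<Sum>D\<in>Pow (Des I). ?g D)"
    using bij_betw_Des_Pow_Des[OF I \<open>n > 0\<close>] by (rule sum.reindex_bij_betw)
  also have "\<dots> = (\<Sum>D | D \<subseteq> Des I \<and> Des K \<subseteq> D. (-1) ^ card D) * (-1) ^ card (Des K)"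
    by (simp only: sum_distrib_right sum.inter_filter[symmetric] finite_Pow_iff finite_Des)
      (simp only: Pow_def mem_Collect_eq)
  also have "\<dots> = (if Des K = Des I then 1 else 0)"
    by (simp add: sum_minus_one_power_card_interval finite_Des flip: power_add)
  also have "Des K = Des I \<longleftrightarrow> K = I"
    using Des_inj[OF K I] by blast
  finally show ?thesis .
qed

definition ribbon_family :: "(nat list \<Rightarrow> ncsf) \<Rightarrow> bool" where
  "ribbon_family Q \<longleftrightarrow> (\<forall>n. \<forall>I\<in>comps n. SI I = (\<Sum>J\<in>{J\<in>comps n. Des J \<subseteq> Des I}. Q J))
                      \<and> (\<forall>J. 0 \<in> set J \<longrightarrow> Q J = 0)"

lemma ribbon_family_ribbon_expansion: "ribbon_family ribbon_expansion"
  unfolding ribbon_family_def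
proof (intro conjI allI ballI impI)
  fix n I assume I: "I \<in> comps n"
  show "SI I = (\<Sum>J\<in>{J\<in>comps n. Des J \<subseteq> Des I}. ribbon_expansion J)"
  proof
    fix K
    have SI: "SI I K = (if K = I then 1 else 0)"
      using SI_eq I by (simp add: comps_def)
    have "(\<Sum>J\<in>{J\<in>comps n. Des J \<subseteq> Des I}. ribbon_expansion J) K = (if K = I then 1 else 0)"
    proof (cases "n = 0")
      case True
      then have "I = []" "{J\<in>comps n. Des J \<subseteq> Des I} = {[]}" using I by (auto simp: comps_0)
      then show ?thesis using True by (auto simp: ribbon_expansion_def comps_0)
    next
      case False
      show ?thesis
      proof (cases "K \<in> comps n")
        case True
        then show ?thesis
          using sum_ribbon_expansion[OF I True] False by (simp add: sum_fun_apply)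
      next
        case K: False
        then have "K \<noteq> I" using I by blast
        moreover have "ribbon_expansion J K = 0" if "J \<in> comps n" for J
          using that K by (simp add: ribbon_expansion_def comps_def)
        ultimately show ?thesis by (simp add: sum_fun_apply)
      qed
    qed
    then show "SI I K = (\<Sum>J\<in>{J\<in>comps n. Des J \<subseteq> Des I}. ribbon_expansion J) K"
      using SI by simp
  qed
next
  fix J :: "nat list" assume "0 \<in> set J"
  then show "ribbon_expansion J = 0" by (simp add: ribbon_expansion_def fun_eq_iff)
qed

lemma ribbon_family_unique:
  assumes "ribbon_family Q" and "ribbon_family Q'"
  shows "Q J = Q' J"
proof (induction "length J" arbitrary: J rule: less_induct)
  case less
  show ?case
  proof (cases "0 \<in> set J")
    case True
    then show ?thesis using assms by (simp add: ribbon_family_def)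
  next
    case False
    define n where "n = sum_list J"
    have J: "J \<in> comps n" using False by (simp add: comps_def n_def)
    let ?A = "{J'\<in>comps n. Des J' \<subseteq> Des J}"
    have J_in: "J \<in> ?A" using J by simp
    have split: "SI J = P J + (\<Sum>J'\<in>?A - {J}. P J')" if "ribbon_family P" for P
      using that J finite_comps by (simp add: ribbon_family_def sum.remove[OF _ J_in])
    have "(\<Sum>J'\<in>?A - {J}. Q J') = (\<Sum>J'\<in>?A - {J}. Q' J')"
    proof (rule sum.cong[OF refl])
      fix J' assume "J' \<in> ?A - {J}"
      then have "length J' < length J" using length_less_if_Des_subset J by blast
      then show "Q J' = Q' J'" using less by blast
    qed
    then show ?thesis using split[OF assms(1)] split[OF assms(2)] by simp
  qed
qed

lemma ribbons_eq_ribbon_expansion: "ribbons = ribbon_expansion"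
proof -
  have "ribbons = (THE Q. ribbon_family Q)"
    by (simp add: ribbons_def ribbon_family_def)
  also have "\<dots> = ribbon_expansion"
    using ribbon_family_ribbon_expansion ribbon_family_unique by (intro the_equality) auto
  finally show ?thesis .
qed

section \<open>Power series in t\<close>

definition odd_count :: "nat list \<Rightarrow> nat" where
  "odd_count K = length (filter odd K)"

definition eps :: "nat list \<Rightarrow> rat" where
  "eps K = (if 0 \<in> set K then 0 else if K = [] then 1
            else if odd (last K) then (-1) ^ (length K + sum_list K) else 0)"

text \<open>nc_of_fps f is f(t): it maps X to t (tt_eq) and is multiplicative (nc_of_fps_mult).\<close>

definition nc_of_fps :: "rat fps \<Rightarrow> ncsf" where
  "nc_of_fps f = (\<lambda>K. f $ odd_count K * eps K)"

lemma odd_count_Nil [simp]: "odd_count [] = 0"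
  by (simp add: odd_count_def)

lemma odd_count_Cons: "odd_count (x # K) = (if odd x then Suc (odd_count K) else odd_count K)"
  by (simp add: odd_count_def)

lemma even_sum_list_iff: "even (sum_list K) \<longleftrightarrow> even (odd_count K)"
  by (induction K) (auto simp: odd_count_Cons)

lemma eps_Cons:
  "eps (x # K) = (if x = 0 then 0 else if odd x then eps K else if K = [] then 0 else - eps K)"
proof (cases "K = []")
  case False
  have "(-1::rat) ^ (length K + (x + sum_list K)) = (-1) ^ x * (-1) ^ (length K + sum_list K)"
    by (simp add: power_add algebra_simps)
  then show ?thesis using False by (auto simp: eps_def)
qed (auto simp: eps_def)

lemma odd_count_pos_if_eps: "eps K \<noteq> 0 \<Longrightarrow> K \<noteq> [] \<Longrightarrow> odd_count K > 0"
  by (induction K) (auto simp: eps_Cons odd_count_Cons split: if_splits)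

lemma nc_of_fps_0: "nc_of_fps 0 = 0"
  by (simp add: nc_of_fps_def fun_eq_iff)

lemma nc_of_fps_1: "nc_of_fps 1 = nc_one"
proof
  fix K
  show "nc_of_fps 1 K = nc_one K"
  proof (cases "K = []")
    case True
    then show ?thesis by (simp add: nc_of_fps_def nc_one_def eps_def)
  next
    case False
    then have "eps K = 0 \<or> odd_count K \<noteq> 0"
      using odd_count_pos_if_eps[of K] by (cases "eps K = 0") auto
    then show ?thesis using False by (auto simp: nc_of_fps_def nc_one_def)
  qed
qed

lemma nc_of_fps_add: "nc_of_fps (f + g) = nc_of_fps f + nc_of_fps g"
  by (simp add: nc_of_fps_def fun_eq_iff algebra_simps)

lemma nc_of_fps_diff: "nc_of_fps (f - g) = nc_of_fps f - nc_of_fps g"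
  by (simp add: nc_of_fps_def fun_eq_iff algebra_simps)

lemma nc_of_fps_const_mult: "nc_of_fps (fps_const c * f) = nc_smult c (nc_of_fps f)"
  by (simp add: nc_of_fps_def nc_smult_def fun_eq_iff)

definition part_shift :: "nat \<Rightarrow> 'a::comm_ring_1 fps \<Rightarrow> 'a fps" where
  "part_shift x f = (if x = 0 then 0 else if odd x then fps_shift 1 f else fps_const (f $ 0) - f)"

lemma part_shift_mult:
  "part_shift x (f * g) = fps_const (f $ 0) * part_shift x g + part_shift x f * g"
  using fps_shift_1_mult[of f g] by (auto simp: part_shift_def algebra_simps)

lemma nc_of_fps_Cons: "nc_of_fps f (x # L) = nc_of_fps (part_shift x f) L"
proof -
  consider "x = 0" | "odd x" | "even x" "x > 0" "L \<noteq> []" "eps L \<noteq> 0"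
    | "even x" "x > 0" "L = [] \<or> eps L = 0"
    by auto
  then show ?thesis
  proof cases
    case 3
    then show ?thesis
      using odd_count_pos_if_eps[of L] by (simp add: nc_of_fps_def part_shift_def eps_Cons odd_count_Cons)
  qed (auto simp: nc_of_fps_def part_shift_def eps_Cons odd_count_Cons)
qed

lemma nc_of_fps_mult: "nc_mult (nc_of_fps f) (nc_of_fps g) = nc_of_fps (f * g)"
proof
  fix K show "nc_mult (nc_of_fps f) (nc_of_fps g) K = nc_of_fps (f * g) K"
  proof (induction K arbitrary: f g)
    case Nil
    then show ?case by (simp add: nc_mult_Nil nc_of_fps_def eps_def)
  next
    case (Cons x K)
    have "nc_mult (nc_of_fps f) (nc_of_fps g) (x # K)
        = f $ 0 * nc_of_fps g (x # K) + nc_mult (nc_of_fps (part_shift x f)) (nc_of_fps g) K"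
      by (simp add: nc_mult_Cons nc_of_fps_Cons) (simp add: nc_of_fps_def eps_def)
    also have "\<dots> = nc_of_fps (fps_const (f $ 0) * part_shift x g + part_shift x f * g) K"
      by (simp add: nc_of_fps_Cons Cons.IH nc_of_fps_add nc_of_fps_const_mult nc_smult_def)
    also have "\<dots> = nc_of_fps (f * g) (x # K)"
      by (simp only: nc_of_fps_Cons part_shift_mult)
    finally show ?case .
  qed
qed

lemma nc_of_fps_power: "nc_pow (nc_of_fps f) n = nc_of_fps (f ^ n)"
  by (induction n) (simp_all add: nc_of_fps_1 nc_of_fps_mult)

lemma nc_of_fps_nc_sum:
  "nc_sum (\<lambda>k. nc_of_fps (F k)) = nc_of_fps (Abs_fps (\<lambda>n. Sum_any (\<lambda>k. F k $ n)))"
proof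
  fix K
  have "Sum_any (\<lambda>k. F k $ n * e) = Sum_any (\<lambda>k. F k $ n) * e" for n and e :: rat
  proof (cases "e = 0")
    case False
    then have "{k. F k $ n * e \<noteq> 0} = {k. F k $ n \<noteq> 0}" by auto
    then show ?thesis by (simp add: Sum_any.expand_set sum_distrib_right)
  qed simp
  then show "nc_sum (\<lambda>k. nc_of_fps (F k)) K = nc_of_fps (Abs_fps (\<lambda>n. Sum_any (\<lambda>k. F k $ n))) K"
    by (simp add: nc_sum_set_def nc_of_fps_def)
qed

lemma nc_log_nc_of_fps:
  assumes "f $ 0 = 1"
  shows "nc_log (nc_of_fps f) = nc_of_fps (fps_ln 1 oo (f - 1))"
proof -
  have term_eq: "(if n = 0 then 0 else nc_smult ((-1) ^ (n + 1) / of_nat n) (nc_pow (nc_of_fps f - nc_one) n))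
      = nc_of_fps (fps_const (fps_ln 1 $ n) * (f - 1) ^ n)" for n :: nat
  proof -
    have "nc_of_fps f - nc_one = nc_of_fps (f - 1)"
      by (simp add: nc_of_fps_diff nc_of_fps_1)
    then have pow: "nc_pow (nc_of_fps f - nc_one) n = nc_of_fps ((f - 1) ^ n)"
      by (simp add: nc_of_fps_power)
    have "(-1::rat) ^ (n + 1) = (-1) ^ (n - 1)" if "n > 0"
      using that by (cases n) simp_all
    then show ?thesis
      by (cases "n = 0") (simp_all add: pow fps_ln_nth nc_of_fps_0 nc_of_fps_const_mult)
  qed
  have "(f - 1) $ 0 = 0" using assms by simp
  then have "Abs_fps (\<lambda>m. Sum_any (\<lambda>n. fps_ln 1 $ n * ((f - 1) ^ n $ m))) = fps_ln 1 oo (f - 1)"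
    by (intro fps_ext) (simp add: fps_compose_nth_Sum_any)
  then show ?thesis
    unfolding nc_log_def term_eq by (simp add: nc_of_fps_nc_sum)
qed

section \<open>The series t and tilde sigma_1\<close>

lemma Lam_apply: "Lam k K = (if K \<in> comps k then (-1) ^ (k + length K) else 0)"
proof (cases "k = 0")
  case True
  then show ?thesis by (simp add: Lam_def nc_one_def comps_0)
next
  case False
  have "Lam k K = ribbon_expansion (replicate k 1) K"
    using False by (simp add: Lam_def ribbons_eq_ribbon_expansion)
  also have "\<dots> = (if K \<in> comps k \<and> Des K \<subseteq> Des (replicate k 1) then (-1) ^ (k + length K) else 0)"
    by (simp add: ribbon_expansion_def sum_list_replicate)
  also have "K \<in> comps k \<and> Des K \<subseteq> Des (replicate k 1) \<longleftrightarrow> K \<in> comps k"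
    unfolding Des_replicate_1 using Des_subset[of K] by (auto simp: comps_def)
  finally show ?thesis .
qed

lemma Des_subset_Des_T_iff:
  assumes "K \<in> comps (2 * k + 1)"
  shows "Des K \<subseteq> Des (replicate k 2 @ [1]) \<longleftrightarrow> odd_count K = 1 \<and> odd (last K)"
proof -
  obtain B y where B: "K = B @ [y]"
    using assms by (cases K rule: rev_cases) (auto simp: comps_def)
  have "Des K \<subseteq> Des (replicate k 2 @ [1]) \<longleftrightarrow> Des K \<subseteq> {d. even d}"
    unfolding Des_replicate_2_1 using Des_subset[of K] assms by (auto simp: comps_def)
  also have "\<dots> \<longleftrightarrow> (\<forall>x\<in>set B. even x)"
    using B by (simp add: Des_subset_evens_iff)
  also have "\<dots> \<longleftrightarrow> odd_count K = 1 \<and> odd y"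
  proof
    assume "\<forall>x\<in>set B. even x"
    moreover from this have "even (sum_list B)"
      using even_sum_list_iff[of B] by (simp add: odd_count_def filter_empty_conv)
    moreover have "odd (sum_list B + y)"
      using B assms by (simp add: comps_def)
    ultimately have "odd y"
      by simp
    with \<open>\<forall>x\<in>set B. even x\<close> show "odd_count K = 1 \<and> odd y"
      using B by (simp add: odd_count_def filter_empty_conv)
  qed (use B in \<open>auto simp: odd_count_def filter_empty_conv\<close>)
  finally show ?thesis
    using B by simp
qed

lemma T_apply:
  assumes "odd i"
  shows "T i K = (if sum_list K = i \<and> odd_count K = 1 then (-1) ^ ((i - 1) div 2) * eps K else 0)"
proof -
  define k where "k = (i - 1) div 2"
  have i: "i = 2 * k + 1" using assms k_def by presburger
  have "sum_list (replicate k 2 @ [1::nat]) = i"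
    using i by (simp add: sum_list_replicate)
  then have T: "T i K = (if K \<in> comps i \<and> Des K \<subseteq> Des (replicate k 2 @ [1])
                         then (-1) ^ (k + 1 + length K) else 0)"
    by (simp add: T_def k_def ribbons_eq_ribbon_expansion ribbon_expansion_def)
  show ?thesis
  proof (cases "K \<in> comps i")
    case False
    then have "sum_list K \<noteq> i \<or> eps K = 0" by (auto simp: comps_def eps_def)
    then show ?thesis using T False by auto
  next
    case K: True
    then have D: "Des K \<subseteq> Des (replicate k 2 @ [1]) \<longleftrightarrow> odd_count K = 1 \<and> odd (last K)"
      using Des_subset_Des_T_iff[of K k] i by simp
    have "K \<noteq> []" "0 \<notin> set K" "sum_list K = i"
      using K assms by (auto simp: comps_def)
    then have "eps K = (if odd (last K) then (-1) ^ (length K + i) else 0)"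
      by (simp add: eps_def)
    moreover have "(-1::rat) ^ (k + 1 + length K) = (-1) ^ k * (-1) ^ (length K + i)"
      using i by (simp add: power_add)
    ultimately show ?thesis
      using T K D \<open>sum_list K = i\<close> by (simp add: k_def)
  qed
qed

lemma tt_eq: "tt = nc_of_fps fps_X"
proof
  fix K
  let ?c = "if odd (sum_list K) \<and> odd_count K = 1 then eps K else 0"
  have "(-1) ^ k * T (2 * k + 1) K = (if k = sum_list K div 2 then ?c else 0)" for k
  proof -
    have "T (2 * k + 1) K = (if sum_list K = 2 * k + 1 \<and> odd_count K = 1 then (-1) ^ k * eps K else 0)"
      by (simp add: T_apply)
    moreover have "sum_list K = 2 * k + 1 \<longleftrightarrow> k = sum_list K div 2 \<and> odd (sum_list K)" by presburger
    moreover have "(-1::rat) ^ k * ((-1) ^ k * e) = e" for e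
      by (simp flip: mult.assoc power_add)
    ultimately show ?thesis by auto
  qed
  then have "tt K = Sum_any (\<lambda>k. if k = sum_list K div 2 then ?c else 0)"
    by (simp add: tt_def nc_sum_set_def nc_smult_def)
  also have "\<dots> = nc_of_fps fps_X K"
    using even_sum_list_iff[of K] by (auto simp: nc_of_fps_def fps_X_nth)
  finally show "tt K = nc_of_fps fps_X K" .
qed

lemma St_apply: "St n K = (if n = sum_list K then (if K = [] then 1 else 2) * eps K else 0)"
proof -
  have "St n K = Lam n K + (\<Sum>k<n. nc_mult (Lam k) (S (n - k)) K)"
    by (simp add: St_def sum_fun_apply lessThan_Suc_atMost[symmetric] S_def)
  also have "(\<Sum>k<n. nc_mult (Lam k) (S (n - k)) K)
      = (\<Sum>k<n. if K \<noteq> [] \<and> last K = n - k then Lam k (butlast K) else 0)"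
    by (intro sum.cong refl) (simp add: nc_mult_S_right)
  finally have St: "St n K = Lam n K + \<dots>" .
  show ?thesis
  proof (cases K rule: rev_cases)
    case Nil
    then show ?thesis using St by (simp add: Lam_apply comps_def eps_def)
  next
    case (snoc B y)
    let ?m = "sum_list B + length B"
    have "(\<Sum>k<n. if K \<noteq> [] \<and> last K = n - k then Lam k (butlast K) else 0)
        = (\<Sum>k<n. if k = sum_list B then (if 0 \<notin> set B \<and> y = n - k then (-1) ^ ?m else 0) else 0)"
      using snoc by (intro sum.cong refl) (auto simp: Lam_apply comps_def)
    also have "\<dots> = (if 0 < y \<and> 0 \<notin> set B \<and> n = sum_list K then (-1) ^ ?m else 0)"
      using snoc by auto
    finally have St': "St n K = Lam n K + \<dots>" using St by simp
    show ?thesis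
    proof (cases "0 < y \<and> 0 \<notin> set B \<and> n = sum_list K")
      case True
      have "Lam n K = (-1) ^ ?m * (-1) ^ (y + 1)"
        using True snoc by (simp add: Lam_apply comps_def power_add[symmetric] algebra_simps)
      moreover have "eps K = (if odd y then (-1) ^ ?m else 0)"
        using True snoc by (auto simp: eps_def power_add)
      ultimately show ?thesis using St' True snoc by auto
    next
      case False
      then have "Lam n K = 0" and "n = sum_list K \<Longrightarrow> eps K = 0"
        using snoc by (auto simp: Lam_apply comps_def eps_def)
      then show ?thesis using St' False by auto
    qed
  qed
qed

lemma sigma1t_eq: "sigma1t = nc_of_fps ((1 + fps_X) * inverse (1 - fps_X))"
proof
  fix K
  have "sigma1t K = (if K = [] then 1 else 2) * eps K"
    by (simp add: sigma1t_def nc_sum_set_def St_apply)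
  also have "\<dots> = nc_of_fps ((1 + fps_X) * inverse (1 - fps_X)) K"
    using odd_count_pos_if_eps[of K]
    by (cases "eps K = 0") (auto simp: nc_of_fps_def fps_one_plus_X_over_one_minus_X_nth)
  finally show "sigma1t K = nc_of_fps ((1 + fps_X) * inverse (1 - fps_X)) K" .
qed

lemma one_plus_tt: "nc_one + tt = nc_of_fps (1 + fps_X)"
  by (simp add: tt_eq nc_of_fps_add nc_of_fps_1)

lemma one_minus_tt: "nc_one - tt = nc_of_fps (1 - fps_X)"
  by (simp add: tt_eq nc_of_fps_diff nc_of_fps_1)

lemma nc_inv_one_minus_tt:
  "nc_invertible (nc_one - tt)" "nc_inv (nc_one - tt) = nc_of_fps (inverse (1 - fps_X))"
proof -
  have "(1 - fps_X) * inverse (1 - fps_X :: rat fps) = 1" "inverse (1 - fps_X :: rat fps) * (1 - fps_X) = 1"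
    by (simp_all add: inverse_mult_eq_1 inverse_mult_eq_1')
  then have "nc_mult (nc_one - tt) (nc_of_fps (inverse (1 - fps_X))) = nc_one"
      "nc_mult (nc_of_fps (inverse (1 - fps_X))) (nc_one - tt) = nc_one"
    by (simp_all add: one_minus_tt nc_of_fps_mult nc_of_fps_1)
  then show "nc_invertible (nc_one - tt)" "nc_inv (nc_one - tt) = nc_of_fps (inverse (1 - fps_X))"
    by (rule nc_inv_eqI)+
qed

lemma nc_log_one_plus_tt_diff:
  "nc_log (nc_one + tt) - nc_log (nc_one - tt) = nc_of_fps (fps_ln 1 - (fps_ln 1 oo - fps_X))"
proof -
  have "nc_log (nc_one + tt) - nc_log (nc_one - tt)
      = nc_of_fps (fps_ln 1 oo fps_X) - nc_of_fps (fps_ln 1 oo - fps_X)"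
    by (simp add: one_plus_tt one_minus_tt nc_log_nc_of_fps)
  then show ?thesis
    by (simp add: nc_of_fps_diff)
qed

lemma nc_sum_odd_powers_tt:
  "nc_sum (\<lambda>k::nat. nc_smult (1 / of_nat (2 * k + 1)) (nc_pow tt (2 * k + 1))) = nc_of_fps fps_artanh"
proof -
  have "nc_sum (\<lambda>k::nat. nc_smult (1 / of_nat (2 * k + 1)) (nc_pow tt (2 * k + 1)))
      = nc_sum (\<lambda>k. nc_of_fps (fps_const (1 / of_nat (2 * k + 1)) * fps_X ^ (2 * k + 1)))"
    by (simp only: tt_eq nc_of_fps_power nc_of_fps_const_mult)
  also have "\<dots> = nc_of_fps fps_artanh"
  proof -
    have "(fps_const (1 / of_nat (2 * k + 1)) * fps_X ^ (2 * k + 1) :: rat fps) $ n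
        = (if k = n div 2 then fps_artanh $ n else 0)" for n k :: nat
    proof (cases "n = 2 * k + 1")
      case False
      then have "\<not> (k = n div 2 \<and> odd n)" by presburger
      then show ?thesis using False by (auto simp: fps_artanh_def)
    qed (simp add: fps_artanh_def)
    then show ?thesis
      by (simp add: nc_of_fps_nc_sum fps_nth_inverse)
  qed
  finally show ?thesis .
qed

section \<open>Products of the T_i\<close>

primrec blocks :: "nat list \<Rightarrow> nat list" where
  "blocks [] = []"
| "blocks (x # K) =
     (if odd x then x # blocks K else (case blocks K of [] \<Rightarrow> [x] | y # ys \<Rightarrow> (x + y) # ys))"

definition odd_sign :: "nat list \<Rightarrow> rat" where
  "odd_sign I = (-1) ^ sum_list (map (\<lambda>i. (i - 1) div 2) I)"

lemma blocks_eq_Nil_iff [simp]: "blocks K = [] \<longleftrightarrow> K = []"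
  by (cases K) (auto split: list.splits)

lemma odd_sign_Cons: "odd_sign (i # I) = (-1) ^ ((i - 1) div 2) * odd_sign I"
  by (simp add: odd_sign_def power_add)

lemma odd_sign_square: "odd_sign I * odd_sign I = 1"
  by (simp add: odd_sign_def flip: power_add)

lemma odd_sign_eq:
  "\<forall>i\<in>set I. odd i \<Longrightarrow> (-1) ^ ((sum_list I - length I) div 2) = odd_sign I"
proof (induction I)
  case (Cons i I)
  obtain m where m: "i = 2 * m + 1" using Cons.prems by (auto elim!: oddE)
  have "length I \<le> sum_list I"
    using length_le_sum_list[of I] Cons.prems by auto
  then have "(sum_list (i # I) - length (i # I)) div 2 = m + (sum_list I - length I) div 2"
    using m by simp
  then show ?case
    using Cons m by (simp add: odd_sign_Cons power_add)
qed (simp add: odd_sign_def)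

lemma blocks_odd_if_eps:
  "eps K \<noteq> 0 \<Longrightarrow> (\<forall>i\<in>set (blocks K). odd i) \<and> length (blocks K) = odd_count K"
proof (induction K)
  case (Cons x K)
  show ?case
  proof (cases "odd x")
    case True
    then show ?thesis using Cons by (auto simp: eps_Cons odd_count_Cons split: if_splits)
  next
    case False
    then have "K \<noteq> []" "eps K \<noteq> 0" "x \<noteq> 0"
      using Cons.prems by (auto simp: eps_Cons split: if_splits)
    then obtain y ys where "blocks K = y # ys" "odd y" "\<forall>i\<in>set ys. odd i"
        "length (blocks K) = odd_count K"
      using Cons.IH by (cases "blocks K") auto
    then show ?thesis using False by (simp add: odd_count_Cons)
  qed
qed simp

lemma odd_half_diff:
  fixes i x :: nat
  assumes "odd i" "even x" "x < i"
  shows "(i - 1) div 2 = x div 2 + (i - x - 1) div 2"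
  using assms by (auto elim!: evenE oddE)

lemma T_Nil: "odd i \<Longrightarrow> T i [] = 0"
  by (simp add: T_apply)

lemma T_Cons_odd:
  assumes "odd i" "odd x"
  shows "T i (x # L) = (if x = i then (-1) ^ ((i - 1) div 2) * nc_one L else 0)"
proof (cases "L = []")
  case True
  then show ?thesis using assms by (auto simp: T_apply odd_count_Cons eps_Cons eps_def nc_one_def)
next
  case False
  have "odd_count (x # L) = 1 \<Longrightarrow> eps (x # L) = 0"
    using assms False odd_count_pos_if_eps[of L] by (auto simp: odd_count_Cons eps_Cons)
  then have "T i (x # L) = 0"
    using assms by (cases "odd_count (x # L) = 1") (simp_all add: T_apply)
  then show ?thesis
    using False by (simp add: nc_one_def)
qed

lemma T_Cons_even:
  assumes "odd i" "even x" "x > 0"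
  shows "T i (x # L) = (if x < i then (-1) ^ (x div 2 + 1) * T (i - x) L else 0)"
proof (cases "x < i \<and> L \<noteq> []")
  case True
  have "(i - 1) div 2 = x div 2 + (i - x - 1) div 2"
    using assms True by (intro odd_half_diff) auto
  then have "(-1::rat) ^ ((i - 1) div 2) * - e = (-1) ^ (x div 2 + 1) * ((-1) ^ ((i - x - 1) div 2) * e)"
    for e by (simp add: power_add)
  moreover have "sum_list (x # L) = i \<longleftrightarrow> sum_list L = i - x"
    using True by auto
  ultimately show ?thesis
    using assms True by (simp add: T_apply odd_count_Cons eps_Cons)
next
  case False
  have "eps (x # L) = 0" if "sum_list (x # L) = i"
  proof (cases "L = []")
    case True
    then show ?thesis using assms by (simp add: eps_Cons)
  next
    case False
    then have "\<not> x < i" using \<open>\<not> (x < i \<and> L \<noteq> [])\<close> by blast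
    moreover have "x \<le> i" using that by auto
    ultimately have "x = i" by simp
    then show ?thesis using assms by simp
  qed
  then have "T i (x # L) = 0"
    using assms by (cases "sum_list (x # L) = i") (simp_all add: T_apply)
  moreover have "x < i \<Longrightarrow> T (i - x) [] = 0"
    using assms by (simp add: T_Nil)
  ultimately show ?thesis
    using False by auto
qed

lemma TI_Cons: "TI (i # I) = nc_mult (T i) (TI I)"
  by (simp add: TI_def)

lemma TI_Cons_Cons:
  "odd i \<Longrightarrow> TI (i # I) (x # K) = nc_mult (\<lambda>L. T i (x # L)) (TI I) K"
  by (simp add: TI_Cons nc_mult_Cons T_Nil)

lemma TI_Cons_Cons_even:
  assumes i: "odd i" and x: "even x" "x > 0"
  shows "TI (i # I) (x # K) = (if x < i then (-1) ^ (x div 2 + 1) * TI ((i - x) # I) K else 0)"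
proof (cases "x < i")
  case True
  then have "(\<lambda>L. T i (x # L)) = (\<lambda>L. (-1) ^ (x div 2 + 1) * T (i - x) L)"
    using i x by (simp add: T_Cons_even)
  have "TI (i # I) (x # K) = nc_mult (\<lambda>L. T i (x # L)) (TI I) K"
    by (rule TI_Cons_Cons[OF i])
  also have "\<dots> = (-1) ^ (x div 2 + 1) * TI ((i - x) # I) K"
    unfolding \<open>(\<lambda>L. T i (x # L)) = _\<close> nc_mult_smult_left TI_Cons ..
  finally show ?thesis
    using True by simp
next
  case False
  then have "(\<lambda>L. T i (x # L)) = (\<lambda>L. 0)"
    using i x by (simp add: T_Cons_even)
  then show ?thesis
    using False i by (simp add: TI_Cons_Cons nc_mult_zero_left)
qed

lemma TI_Cons_even_step:
  assumes i: "odd i" and x: "even x" "x > 0" and I: "\<forall>j\<in>set I. odd j"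
    and IH: "\<And>J. \<forall>j\<in>set J. odd j \<Longrightarrow> TI J K = (if J = blocks K then odd_sign J * eps K else 0)"
  shows "TI (i # I) (x # K) = (if i # I = blocks (x # K) then odd_sign (i # I) * eps (x # K) else 0)"
proof -
  note step = TI_Cons_Cons_even[OF i x, of I K]
  show ?thesis
  proof (cases "K = []")
    case True
    then show ?thesis using step x by (simp add: TI_Cons nc_mult_Nil T_Nil i eps_Cons)
  next
    case False
    then obtain y ys where y: "blocks K = y # ys" by (cases "blocks K") auto
    have blocks: "blocks (x # K) = (x + y) # ys" using x y by simp
    have "i # I = (x + y) # ys \<longleftrightarrow> x < i \<and> (i - x) # I = y # ys"
      using i x by (auto intro: odd_pos)
    moreover have "odd_sign (i # I) * - e = (-1) ^ (x div 2 + 1) * (odd_sign ((i - x) # I) * e)"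
      if "x < i" for e
    proof -
      have "(i - 1) div 2 = x div 2 + (i - x - 1) div 2"
        using that i x by (intro odd_half_diff)
      then show ?thesis by (simp add: odd_sign_Cons power_add)
    qed
    ultimately show ?thesis
      using step IH[of "(i - x) # I"] i x I False blocks y by (auto simp: eps_Cons)
  qed
qed

lemma TI_apply:
  "\<forall>i\<in>set I. odd i \<Longrightarrow> TI I K = (if I = blocks K then odd_sign I * eps K else 0)"
proof (induction K arbitrary: I)
  case Nil
  then show ?case
    by (cases I) (auto simp: TI_def nc_one_def odd_sign_def eps_def TI_Cons nc_mult_Nil T_Nil)
next
  case (Cons x K)
  show ?case
  proof (cases I)
    case Nil
    moreover have "[] \<noteq> blocks (x # K)"
      by (metis blocks_eq_Nil_iff list.distinct(1))
    ultimately show ?thesis by (auto simp: TI_def nc_one_def simp del: blocks.simps)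
  next
    case (Cons i I')
    then have i: "odd i" and I': "\<forall>j\<in>set I'. odd j" using Cons.prems by auto
    consider "x = 0" | "odd x" | "even x" "x > 0" by auto
    then show ?thesis
    proof cases
      case 1
      then have "(\<lambda>L. T i (x # L)) = (\<lambda>L. 0)" using i by (simp add: T_apply eps_Cons fun_eq_iff)
      then show ?thesis using 1 Cons by (simp add: TI_Cons_Cons i nc_mult_zero_left eps_Cons)
    next
      case 2
      then have "TI I (x # K) = (if x = i then (-1) ^ ((i - 1) div 2) * TI I' K else 0)"
        using Cons i by (simp add: TI_Cons_Cons T_Cons_odd nc_mult_smult_left nc_mult_zero_left)
      then show ?thesis
        using Cons.IH[OF I'] 2 Cons by (auto simp: odd_sign_Cons eps_Cons)
    next
      case 3
      then show ?thesis
        using TI_Cons_even_step[OF i 3 I' Cons.IH] Cons by simp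
    qed
  qed
qed

lemma nc_sum_TI_odd_compositions:
  "nc_sum_set {I. (\<forall>i\<in>set I. odd i) \<and> odd (length I)}
      (\<lambda>I. nc_smult ((-1) ^ ((sum_list I - length I) div 2) / of_nat (length I)) (TI I))
    = nc_of_fps fps_artanh"
proof
  fix K
  let ?A = "{I. (\<forall>i\<in>set I. odd i) \<and> odd (length I)}"
  let ?w = "\<lambda>I. (-1::rat) ^ ((sum_list I - length I) div 2) / of_nat (length I)"
  let ?c = "if blocks K \<in> ?A then ?w (blocks K) * (odd_sign (blocks K) * eps K) else 0"
  have single: "(if I \<in> ?A then ?w I * TI I K else 0) = (if I = blocks K then ?c else 0)" for I
    by (cases "I \<in> ?A") (auto simp: TI_apply)
  have "nc_sum_set ?A (\<lambda>I. nc_smult (?w I) (TI I)) K = Sum_any (\<lambda>I. if I = blocks K then ?c else 0)"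
    unfolding nc_sum_set_def nc_smult_def single ..
  also have "\<dots> = ?c"
    by (rule Sum_any.delta)
  also have "\<dots> = nc_of_fps fps_artanh K"
  proof (cases "eps K = 0")
    case False
    then have odd: "\<forall>i\<in>set (blocks K). odd i" and len: "length (blocks K) = odd_count K"
      using blocks_odd_if_eps by blast+
    have "?w (blocks K) * (odd_sign (blocks K) * eps K)
        = (odd_sign (blocks K) * odd_sign (blocks K)) * eps K / of_nat (odd_count K)"
      unfolding odd_sign_eq[OF odd] by (simp add: len)
    also have "\<dots> = eps K / of_nat (odd_count K)"
      by (simp only: odd_sign_square mult_1)
    finally have "?w (blocks K) * (odd_sign (blocks K) * eps K) = eps K / of_nat (odd_count K)" .
    then show ?thesis
      using odd len by (simp add: nc_of_fps_def fps_artanh_def)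
  qed (simp add: nc_of_fps_def)
  finally show "nc_sum_set ?A (\<lambda>I. nc_smult (?w I) (TI I)) K = nc_of_fps fps_artanh K" .
qed

theorem mainTheorem5:
  shows "nc_invertible (nc_one - tt)
    \<and> sigma1t = nc_mult (nc_one + tt) (nc_inv (nc_one - tt))
    \<and> nc_log sigma1t = nc_log (nc_one + tt) - nc_log (nc_one - tt)
    \<and> nc_log (nc_one + tt) - nc_log (nc_one - tt)
        = nc_smult 2 (nc_sum (\<lambda>k::nat. nc_smult (1 / of_nat (2 * k + 1)) (nc_pow tt (2 * k + 1))))
    \<and> nc_smult 2 (nc_sum (\<lambda>k::nat. nc_smult (1 / of_nat (2 * k + 1)) (nc_pow tt (2 * k + 1))))
        = nc_smult 2 (nc_sum_set {I. (\<forall>i\<in>set I. odd i) \<and> odd (length I)}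
             (\<lambda>I. nc_smult ((-1) ^ ((sum_list I - length I) div 2) / of_nat (length I)) (TI I)))"
proof (intro conjI)
  show "nc_invertible (nc_one - tt)"
    by (rule nc_inv_one_minus_tt)
  show "sigma1t = nc_mult (nc_one + tt) (nc_inv (nc_one - tt))"
    by (simp add: sigma1t_eq one_plus_tt nc_inv_one_minus_tt nc_of_fps_mult)
  have "nc_log sigma1t = nc_of_fps (fps_ln 1 - (fps_ln 1 oo - fps_X))"
    by (simp add: sigma1t_eq nc_log_nc_of_fps fps_ln_compose_one_plus_X_over_one_minus_X)
  then show "nc_log sigma1t = nc_log (nc_one + tt) - nc_log (nc_one - tt)"
    by (simp add: nc_log_one_plus_tt_diff)
  show "nc_log (nc_one + tt) - nc_log (nc_one - tt)
      = nc_smult 2 (nc_sum (\<lambda>k::nat. nc_smult (1 / of_nat (2 * k + 1)) (nc_pow tt (2 * k + 1))))"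
    by (simp only: nc_log_one_plus_tt_diff fps_ln_minus_fps_ln_compose_uminus nc_of_fps_const_mult
        nc_sum_odd_powers_tt)
  show "nc_smult 2 (nc_sum (\<lambda>k::nat. nc_smult (1 / of_nat (2 * k + 1)) (nc_pow tt (2 * k + 1))))
      = nc_smult 2 (nc_sum_set {I. (\<forall>i\<in>set I. odd i) \<and> odd (length I)}
          (\<lambda>I. nc_smult ((-1) ^ ((sum_list I - length I) div 2) / of_nat (length I)) (TI I)))"
    by (simp only: nc_sum_odd_powers_tt nc_sum_TI_odd_compositions)
qed

end
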